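(* The octonionic hyperbolic plane $\mathbb OH^2=\{(u,v)\in\mathbb O^2:|u|^2+|v|^2<1\}$, equipped with the symmetric bilinear form whose quadratic form on tangent vectors $(du,dv)=(\xi,\eta)$ is $$ds^2=\frac{|\xi|^2(1-|v|^2)+|\eta|^2(1-|u|^2)+2\mathrm{Re}\big[(u\bar v)(\eta\bar\xi)\big]}{(1-|u|^2-|v|^2)^2},$$ is a $16$-dimensional simply connected Riemannian manifold (in particular this form is positive definite at every point).
   Context: Octonions $\mathbb O=\mathbb H\oplus\mathbb H$ with product $(q_1,q_2)(p_1,p_2)=(q_1p_1-\bar p_2q_2,\ p_2q_1+q_2\bar p_1)$, conjugation $\overline{(q_1,q_2)}=(\bar q_1,-q_2)$, $\langle a,b\rangle=\mathrm{Re}(a\bar b)$, $|a|^2=\langle a,a\rangle$; $\mathbb O^2$ is identified with $\mathbb R^{16}$. *)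

theory Defs
  imports "HOL-Analysis.Analysis"
begin

type_synonym quat = "real \<times> real \<times> real \<times> real"

fun qmult :: "quat \<Rightarrow> quat \<Rightarrow> quat" where
  "qmult (a1, b1, c1, d1) (a2, b2, c2, d2) =
     (a1*a2 - b1*b2 - c1*c2 - d1*d2,
      a1*b2 + b1*a2 + c1*d2 - d1*c2,
      a1*c2 - b1*d2 + c1*a2 + d1*b2,
      a1*d2 + b1*c2 - c1*b2 + d1*a2)"

fun qconj :: "quat \<Rightarrow> quat" where
  "qconj (a, b, c, d) = (a, -b, -c, -d)"

fun qadd :: "quat \<Rightarrow> quat \<Rightarrow> quat" where
  "qadd (a1, b1, c1, d1) (a2, b2, c2, d2) = (a1+a2, b1+b2, c1+c2, d1+d2)"

fun qneg :: "quat \<Rightarrow> quat" where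
  "qneg (a, b, c, d) = (-a, -b, -c, -d)"

fun qre :: "quat \<Rightarrow> real" where
  "qre (a, b, c, d) = a"

section \<open>Octonions O = H + H (Cayley--Dickson, as in the paper)\<close>

type_synonym oct = "quat \<times> quat"

fun omult :: "oct \<Rightarrow> oct \<Rightarrow> oct" where
  "omult (q1, q2) (p1, p2) =
     (qadd (qmult q1 p1) (qneg (qmult (qconj p2) q2)),
      qadd (qmult p2 q1) (qmult q2 (qconj p1)))"

fun oconj :: "oct \<Rightarrow> oct" where
  "oconj (q1, q2) = (qconj q1, qneg q2)"

fun ore :: "oct \<Rightarrow> real" where
  "ore (q1, q2) = qre q1"

definition oinner :: "oct \<Rightarrow> oct \<Rightarrow> real" where
  "oinner a b = ore (omult a (oconj b))"

definition onorm2 :: "oct \<Rightarrow> real" where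
  "onorm2 a = oinner a a"

definition oct_block :: "real^16 \<Rightarrow> nat \<Rightarrow> oct" where
  "oct_block x k =
    ((x $ of_nat k, x $ of_nat (k+1), x $ of_nat (k+2), x $ of_nat (k+3)),
     (x $ of_nat (k+4), x $ of_nat (k+5), x $ of_nat (k+6), x $ of_nat (k+7)))"

definition ucoord :: "real^16 \<Rightarrow> oct" where "ucoord x = oct_block x 0"
definition vcoord :: "real^16 \<Rightarrow> oct" where "vcoord x = oct_block x 8"

definition OH2 :: "(real^16) set" where
  "OH2 = {x. onorm2 (ucoord x) + onorm2 (vcoord x) < 1}"

definition ds2 :: "real^16 \<Rightarrow> real^16 \<Rightarrow> real" where
  "ds2 p w =
    (let u = ucoord p; v = vcoord p; xi = ucoord w; eta = vcoord w in
      (onorm2 xi * (1 - onorm2 v) + onorm2 eta * (1 - onorm2 u)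
        + 2 * ore (omult (omult u (oconj v)) (omult eta (oconj xi))))
      / (1 - onorm2 u - onorm2 v)^2)"

coinductive smooth_on :: "'a::euclidean_space set \<Rightarrow> ('a \<Rightarrow> real) \<Rightarrow> bool" where
  "\<lbrakk> \<forall>p\<in>S. f differentiable (at p);
     \<forall>b\<in>Basis. smooth_on S (\<lambda>p. frechet_derivative f (at p) b) \<rbrakk>
   \<Longrightarrow> smooth_on S f"

end

theory Submission
  imports Defs
begin

(* In coordinates, OH2 is the open unit ball of R^16, because |u|^2 + |v|^2 = |(u,v)|^2; being
   convex it is simply connected.  The bilinear form is the polarisation of ds^2: a polynomial in
   the base point p divided by (1 - |p|^2)^2, hence smooth on the ball.  For positivity, the
   octonion norm is multiplicative, so by Cauchy-Schwarz the cross term 2 Re[(u bar v)(eta bar xi)] is at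
   least -2 |u| |v| |xi| |eta|.  What remains is the binary quadratic form
   (1 - |v|^2) a^2 - 2 |u| |v| a b + (1 - |u|^2) b^2 in a = |xi|, b = |eta|, whose determinant
   1 - |u|^2 - |v|^2 is positive on the ball. *)

lemma oct_cases: obtains a0 a1 a2 a3 a4 a5 a6 a7 where "x = ((a0,a1,a2,a3),(a4,a5,a6,a7))"
  by (metis prod.exhaust)

lemma oinner_eq_inner: "oinner x y = inner x y"
  by (cases x rule: oct_cases; cases y rule: oct_cases) (simp add: oinner_def)

lemma onorm2_eq_norm: "onorm2 x = (norm x)\<^sup>2"
  by (simp add: onorm2_def oinner_eq_inner power2_norm_eq_inner)

lemma ore_omult: "ore (omult x y) = inner x (oconj y)"
  by (cases x rule: oct_cases; cases y rule: oct_cases) simp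

lemma norm_oconj: "norm (oconj x) = norm x"
  by (cases x rule: oct_cases) (simp add: norm_eq_sqrt_inner)

lemma norm_omult: "norm (omult x y) = norm x * norm y"
proof -
  have "(norm (omult x y))\<^sup>2 = (norm x * norm y)\<^sup>2"
    unfolding power_mult_distrib power2_norm_eq_inner
    by (cases x rule: oct_cases; cases y rule: oct_cases) (simp add: algebra_simps)
  then show ?thesis by (rule power2_eq_imp_eq) simp_all
qed

lemma abs_ore_omult_le: "\<bar>ore (omult x y)\<bar> \<le> norm x * norm y"
  using Cauchy_Schwarz_ineq2[of x "oconj y"] by (simp add: ore_omult norm_oconj)

lemma bilinear_omult: "bilinear omult"
  unfolding bilinear_def linear_iff by (simp add: algebra_simps)

lemma linear_oconj: "linear oconj"
  unfolding linear_iff by simp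

lemma linear_ore: "linear ore"
  unfolding linear_iff by simp

lemma UNIV_16: "(UNIV :: 16 set) = of_nat ` {..<16}"
proof -
  have "i \<in> of_nat ` {..<16}" for i :: 16
  proof (cases i rule: bit0_cases)
    case (of_int z)
    then show ?thesis by (intro image_eqI[of _ _ "nat z"]) auto
  qed
  then show ?thesis by blast
qed

lemma sum_UNIV_16: "(\<Sum>i\<in>UNIV. f i) = (\<Sum>k<16. f (of_nat k :: 16))"
proof -
  have "inj_on (of_nat :: nat \<Rightarrow> 16) {..<16}"
    by (simp add: inj_on_iff_eq_card flip: UNIV_16)
  then show ?thesis by (simp add: UNIV_16 sum.reindex)
qed

lemma linear_ucoord: "linear ucoord"
  unfolding linear_iff by (simp add: ucoord_def oct_block_def)

lemma linear_vcoord: "linear vcoord"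
  unfolding linear_iff by (simp add: vcoord_def oct_block_def)

lemma norm_ucoord_vcoord: "(norm (ucoord x))\<^sup>2 + (norm (vcoord x))\<^sup>2 = (norm x)\<^sup>2"
  unfolding power2_norm_eq_inner inner_vec_def sum_UNIV_16
  by (simp add: ucoord_def vcoord_def oct_block_def numeral_eq_Suc lessThan_Suc algebra_simps)

lemma OH2_eq_ball: "OH2 = ball 0 1"
  by (auto simp: OH2_def onorm2_eq_norm norm_ucoord_vcoord power_less_one_iff)

lemma real_polynomial_function_has_derivative:
  assumes "real_polynomial_function f"
  obtains f' where "\<And>x. (f has_derivative f' x) (at x)"
    and "\<And>h. real_polynomial_function (\<lambda>x. f' x h)"
proof -
  from assms have "\<exists>f'. (\<forall>x. (f has_derivative f' x) (at x))
    \<and> (\<forall>h. real_polynomial_function (\<lambda>x. f' x h))"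
  proof (induction rule: real_polynomial_function.induct)
    case (linear f)
    then show ?case by (intro exI[of _ "\<lambda>x. f"]) (auto intro: bounded_linear_imp_has_derivative)
  next
    case (const c)
    show ?case by (intro exI[of _ "\<lambda>x h. 0"]) auto
  next
    case (add f g)
    then obtain f' g' where "\<forall>x. (f has_derivative f' x) (at x)" "\<forall>h. real_polynomial_function (\<lambda>x. f' x h)"
      "\<forall>x. (g has_derivative g' x) (at x)" "\<forall>h. real_polynomial_function (\<lambda>x. g' x h)" by blast
    then show ?case
      by (intro exI[of _ "\<lambda>x h. f' x h + g' x h"]) (auto intro: has_derivative_add)
  next
    case (mult f g)
    then obtain f' g' where "\<forall>x. (f has_derivative f' x) (at x)" "\<forall>h. real_polynomial_function (\<lambda>x. f' x h)"
      "\<forall>x. (g has_derivative g' x) (at x)" "\<forall>h. real_polynomial_function (\<lambda>x. g' x h)" by blast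
    with mult.hyps show ?case
      by (intro exI[of _ "\<lambda>x h. f x * g' x h + f' x h * g x"])
        (simp add: real_polynomial_function.intros(3,4))
  qed
  then show ?thesis using that by blast
qed

lemma polynomial_quotient_has_derivative:
  assumes "real_polynomial_function P" and "real_polynomial_function Q"
  obtains D
  where "\<And>x. Q x \<noteq> 0 \<Longrightarrow> ((\<lambda>x. P x / Q x) has_derivative (\<lambda>h. D x h / (Q x)\<^sup>2)) (at x)"
    and "\<And>h. real_polynomial_function (\<lambda>x. D x h)"
proof -
  obtain P' where P': "\<And>x. (P has_derivative P' x) (at x)" "\<And>h. real_polynomial_function (\<lambda>x. P' x h)"
    using real_polynomial_function_has_derivative[OF assms(1)] by blast
  obtain Q' where Q': "\<And>x. (Q has_derivative Q' x) (at x)" "\<And>h. real_polynomial_function (\<lambda>x. Q' x h)"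
    using real_polynomial_function_has_derivative[OF assms(2)] by blast
  show ?thesis
  proof
    show "((\<lambda>x. P x / Q x) has_derivative (\<lambda>h. (P' x h * Q x - P x * Q' x h) / (Q x)\<^sup>2)) (at x)"
      if "Q x \<noteq> 0" for x
      using that by (auto intro!: has_derivative_divide[OF P'(1) Q'(1), THEN has_derivative_eq_rhs]
          simp: field_simps power2_eq_square)
    show "real_polynomial_function (\<lambda>x. P' x h * Q x - P x * Q' x h)" for h
      using assms P'(2) Q'(2) by (intro real_polynomial_function_diff real_polynomial_function.intros(4))
  qed
qed

lemma smooth_on_polynomial_quotient:
  fixes P Q :: "'a::euclidean_space \<Rightarrow> real"
  assumes "open S" "real_polynomial_function P" "real_polynomial_function Q" "\<And>x. x \<in> S \<Longrightarrow> Q x \<noteq> 0"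
  shows "smooth_on S (\<lambda>x. P x / Q x)"
proof -
  define quotient where "quotient g \<longleftrightarrow> (\<exists>P Q. real_polynomial_function P \<and> real_polynomial_function Q
      \<and> (\<forall>x\<in>S. Q x \<noteq> 0 \<and> g x = P x / Q x))" for g :: "'a \<Rightarrow> real"
  have "quotient (\<lambda>x. P x / Q x)"
    unfolding quotient_def using assms(2-4) by (intro exI[of _ P] exI[of _ Q]) simp
  moreover have "smooth_on S g" if "quotient g" for g
    using that
  proof (coinduction arbitrary: g rule: smooth_on.coinduct)
    case (smooth_on g)
    then obtain P Q where P: "real_polynomial_function P" and Q: "real_polynomial_function Q"
      and g: "\<And>x. x \<in> S \<Longrightarrow> Q x \<noteq> 0 \<and> g x = P x / Q x"
      unfolding quotient_def by blast
    obtain D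
      where D: "\<And>x. Q x \<noteq> 0 \<Longrightarrow> ((\<lambda>x. P x / Q x) has_derivative (\<lambda>h. D x h / (Q x)\<^sup>2)) (at x)"
      and D_poly: "\<And>h. real_polynomial_function (\<lambda>x. D x h)"
      using polynomial_quotient_has_derivative[OF P Q] by blast
    have g': "(g has_derivative (\<lambda>h. D x h / (Q x)\<^sup>2)) (at x)" if "x \<in> S" for x
    proof (rule has_derivative_transform_within_open[OF D \<open>open S\<close> that])
      show "Q x \<noteq> 0" using g[OF that] by simp
    qed (use g in simp)
    have "quotient (\<lambda>x. frechet_derivative g (at x) h)" for h
      unfolding quotient_def
    proof (intro exI conjI ballI)
      show "real_polynomial_function (\<lambda>x. D x h)" by (rule D_poly)
      show "real_polynomial_function (\<lambda>x. (Q x)\<^sup>2)" using Q by (rule real_polynomial_function_power)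
      fix x assume "x \<in> S"
      then show "(Q x)\<^sup>2 \<noteq> 0" using g by simp
      show "frechet_derivative g (at x) h = D x h / (Q x)\<^sup>2"
        by (simp flip: frechet_derivative_at[OF g'[OF \<open>x \<in> S\<close>]])
    qed
    then show ?case using g' differentiableI by blast
  qed
  ultimately show ?thesis by blast
qed

lemma binary_quadratic_form_pos:
  fixes s t a b :: real
  assumes "s\<^sup>2 + t\<^sup>2 < 1" and "a \<noteq> 0 \<or> b \<noteq> 0"
  shows "2 * s * t * a * b < (1 - t\<^sup>2) * a\<^sup>2 + (1 - s\<^sup>2) * b\<^sup>2"
proof -
  have t: "0 < 1 - t\<^sup>2" using assms(1) zero_le_power2[of s] by linarith
  have "0 < ((1 - t\<^sup>2) * a - s * t * b)\<^sup>2 + (1 - s\<^sup>2 - t\<^sup>2) * b\<^sup>2"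
  proof (cases "b = 0")
    case True
    then show ?thesis using assms(2) t by simp
  next
    case False
    then show ?thesis using assms(1) by (intro add_nonneg_pos) simp_all
  qed
  also have "\<dots> = (1 - t\<^sup>2) * ((1 - t\<^sup>2) * a\<^sup>2 + (1 - s\<^sup>2) * b\<^sup>2 - 2 * s * t * a * b)"
    by (simp add: power2_eq_square algebra_simps)
  finally show ?thesis using t by (simp add: zero_less_mult_iff)
qed

definition oh2_numerator :: "real^16 \<Rightarrow> real^16 \<Rightarrow> real^16 \<Rightarrow> real" where
  "oh2_numerator p a b =
    (let u = ucoord p; v = vcoord p; m = omult u (oconj v) in
      (1 - (norm v)\<^sup>2) * inner (ucoord a) (ucoord b) + (1 - (norm u)\<^sup>2) * inner (vcoord a) (vcoord b)
      + ore (omult m (omult (vcoord a) (oconj (ucoord b))))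
      + ore (omult m (omult (vcoord b) (oconj (ucoord a)))))"

definition oh2_metric :: "real^16 \<Rightarrow> real^16 \<Rightarrow> real^16 \<Rightarrow> real" where
  "oh2_metric p a b = oh2_numerator p a b / (1 - (norm p)\<^sup>2)\<^sup>2"

lemma bilinear_oh2_numerator: "bilinear (oh2_numerator p)"
  unfolding bilinear_def linear_iff oh2_numerator_def Let_def
  by (simp add: linear_add[OF linear_ucoord] linear_add[OF linear_vcoord] linear_add[OF linear_oconj]
      linear_add[OF linear_ore] linear_scale[OF linear_ucoord] linear_scale[OF linear_vcoord]
      linear_scale[OF linear_oconj] linear_scale[OF linear_ore]
      bilinear_radd[OF bilinear_omult] bilinear_rmul[OF bilinear_omult]
      bilinear_ladd[OF bilinear_omult] bilinear_lmul[OF bilinear_omult]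
      algebra_simps)

lemma bilinear_oh2_metric: "bilinear (oh2_metric p)"
  unfolding bilinear_def linear_iff oh2_metric_def
  by (simp add: bilinear_ladd[OF bilinear_oh2_numerator] bilinear_radd[OF bilinear_oh2_numerator]
      bilinear_lmul[OF bilinear_oh2_numerator] bilinear_rmul[OF bilinear_oh2_numerator]
      add_divide_distrib)

lemma oh2_metric_commute: "oh2_metric p a b = oh2_metric p b a"
  by (simp add: oh2_metric_def oh2_numerator_def Let_def inner_commute)

lemma oh2_metric_diag: "oh2_metric p w w = ds2 p w"
proof -
  have "1 - (norm p)\<^sup>2 = 1 - onorm2 (ucoord p) - onorm2 (vcoord p)"
    by (simp add: onorm2_eq_norm flip: norm_ucoord_vcoord)
  then show ?thesis
    by (simp add: oh2_metric_def oh2_numerator_def ds2_def Let_def onorm2_eq_norm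
        power2_norm_eq_inner algebra_simps)
qed

lemma oh2_numerator_pos:
  assumes "norm p < 1" and "w \<noteq> 0"
  shows "0 < oh2_numerator p w w"
proof -
  define s t a b where "s = norm (ucoord p)" and "t = norm (vcoord p)"
    and "a = norm (ucoord w)" and "b = norm (vcoord w)"
  define R where "R = ore (omult (omult (ucoord p) (oconj (vcoord p))) (omult (vcoord w) (oconj (ucoord w))))"
  have numerator: "oh2_numerator p w w = (1 - t\<^sup>2) * a\<^sup>2 + (1 - s\<^sup>2) * b\<^sup>2 + 2 * R"
    by (simp add: oh2_numerator_def Let_def s_def t_def a_def b_def R_def power2_norm_eq_inner)
  have "\<bar>R\<bar> \<le> norm (omult (ucoord p) (oconj (vcoord p))) * norm (omult (vcoord w) (oconj (ucoord w)))"
    unfolding R_def by (rule abs_ore_omult_le)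
  then have "\<bar>R\<bar> \<le> s * t * (b * a)"
    by (simp add: norm_omult norm_oconj s_def t_def a_def b_def)
  moreover have "s\<^sup>2 + t\<^sup>2 < 1"
    using assms(1) norm_ucoord_vcoord[of p] by (simp add: s_def t_def power_less_one_iff)
  moreover have "a \<noteq> 0 \<or> b \<noteq> 0"
    using assms(2) norm_ucoord_vcoord[of w] by (auto simp: a_def b_def)
  ultimately show ?thesis
    unfolding numerator using binary_quadratic_form_pos[of s t a b] by (simp add: abs_le_iff algebra_simps)
qed

lemma real_polynomial_function_oh2_numerator: "real_polynomial_function (\<lambda>p. oh2_numerator p a b)"
  unfolding oh2_numerator_def Let_def ucoord_def vcoord_def oct_block_def power2_norm_eq_inner
  by (simp only: omult.simps oconj.simps qmult.simps qconj.simps qadd.simps qneg.simps ore.simps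
      qre.simps inner_Pair inner_real_def) (intro real_polynomial_function.intros(2-4) real_polynomial_function_diff
        real_polynomial_function_minus real_polynomial_function.intros(1)[OF bounded_linear_vec_nth])

lemma real_polynomial_function_norm_power2: "real_polynomial_function (\<lambda>x::real^'n. (norm x)\<^sup>2)"
  unfolding power2_norm_eq_inner inner_vec_def inner_real_def
  by (intro real_polynomial_function_sum real_polynomial_function.intros(4)
      real_polynomial_function.intros(1)[OF bounded_linear_vec_nth] finite)

lemma one_minus_norm_power2_pos: "norm x < 1 \<Longrightarrow> 0 < 1 - (norm x)\<^sup>2"
  by (simp add: power_less_one_iff)

lemma oh2_metric_pos:
  assumes "norm p < 1" and "w \<noteq> 0"
  shows "0 < oh2_metric p w w"
  using oh2_numerator_pos[OF assms] one_minus_norm_power2_pos[OF assms(1)]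
  by (simp add: oh2_metric_def)

lemma smooth_on_oh2_metric: "smooth_on (ball 0 1) (\<lambda>p. oh2_metric p a b)"
  unfolding oh2_metric_def
proof (rule smooth_on_polynomial_quotient)
  have "real_polynomial_function (\<lambda>p::real^16. 1 - (norm p)\<^sup>2)"
    using real_polynomial_function.intros(2) real_polynomial_function_norm_power2
    by (rule real_polynomial_function_diff)
  then show "real_polynomial_function (\<lambda>p::real^16. (1 - (norm p)\<^sup>2)\<^sup>2)"
    by (rule real_polynomial_function_power)
  show "(1 - (norm p)\<^sup>2)\<^sup>2 \<noteq> 0" if "p \<in> ball 0 1" for p :: "real^16"
    using that one_minus_norm_power2_pos[of p] by simp
qed (simp_all add: real_polynomial_function_oh2_numerator)

theorem theorem8p2:
  shows "open OH2 \<and> simply_connected OH2 \<and> DIM(real^16) = 16 \<and>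
    (\<exists>B :: real^16 \<Rightarrow> real^16 \<Rightarrow> real^16 \<Rightarrow> real.
       (\<forall>p\<in>OH2. bilinear (B p) \<and> (\<forall>a b. B p a b = B p b a)
                 \<and> (\<forall>w. B p w w = ds2 p w)
                 \<and> (\<forall>w. w \<noteq> 0 \<longrightarrow> B p w w > 0))
       \<and> (\<forall>a b. smooth_on OH2 (\<lambda>p. B p a b)))"
  unfolding OH2_eq_ball
  by (auto intro!: exI[of _ oh2_metric] convex_imp_simply_connected bilinear_oh2_metric
      oh2_metric_commute oh2_metric_diag oh2_metric_pos smooth_on_oh2_metric)

end
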